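(* For any discrete group $G$, $HC^\pm_\bullet(kG;1,\varepsilon)\cong HC^\pm_\bullet(G,k)$.
   Context: $k$ is a field of characteristic $0$; $kG$ is the group Hopf algebra ($\Delta(g)=g\otimes g$, $\varepsilon(g)=1$, $S(g)=g^{-1}$). $HC^\pm_\bullet(kG;1,\varepsilon)$ is the dihedral homology of the dihedral module $\mathrm{CC}_n(kG;1,\varepsilon)=(kG)^{\otimes n}$ with faces $\partial_0(g_1\otimes\cdots\otimes g_n)=g_2\otimes\cdots\otimes g_n$, $\partial_i=g_1\otimes\cdots\otimes g_ig_{i+1}\otimes\cdots\otimes g_n$ ($1\le i\le n-1$), $\partial_n=g_1\otimes\cdots\otimes g_{n-1}$, degeneracies inserting $1$, $\tau_n(g_1\otimes\cdots\otimes g_n)=(g_1\cdots g_n)^{-1}\otimes g_1\otimes\cdots\otimes g_{n-1}$, $\omega_n(g_1\otimes\cdots\otimes g_n)=g_n^{-1}\otimes\cdots\otimes g_1^{-1}$. The dihedral group homology $HC^\pm_\bullet(G,k)$ is the dihedral homology of the dihedral submodule of the standard dihedral module of the $*$-algebra $kG$ (with $g^*=g^{-1}$; $\mathcal{A}^{\otimes n+1}$ with faces multiplying adjacent factors and cyclically the last with the first, $\tau_n(a_0\otimes\cdots\otimes a_n)=a_n\otimes a_0\otimes\cdots\otimes a_{n-1}$, $\omega_n(a_0\otimes\cdots\otimes a_n)=a_0^*\otimes a_n^*\otimes\cdots\otimes a_1^*$) spanned by the tensors $g_0\otimes\cdots\otimes g_n$ with $g_i\in G$ and $g_0g_1\cdots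 g_n=1$. Dihedral homology means homology of the $\pm1$-eigenspaces of the involution on the cyclic complex. *)

theory Defs
  imports "HOL-Algebra.Group"
begin

text \<open>A chain in degree n is a finitely supported k-valued function on the
basis set of degree n (basis elements are lists of group elements).\<close>

definition chains :: "'a set \<Rightarrow> ('a \<Rightarrow> 'k::zero) set" where
  "chains B = {c. finite {x. c x \<noteq> 0} \<and> {x. c x \<noteq> 0} \<subseteq> B}"

definition lin :: "('a \<Rightarrow> 'b) \<Rightarrow> ('a \<Rightarrow> 'k::comm_ring_1) \<Rightarrow> 'b \<Rightarrow> 'k" where
  "lin f c y = (\<Sum>x | c x \<noteq> 0 \<and> f x = y. c x)"

text \<open>face n i : degree n -> degree n-1 (i = 0..n), tau n, omega n : degree n -> degree n.\<close>

definition bdry :: "(nat \<Rightarrow> nat \<Rightarrow> 'a \<Rightarrow> 'a) \<Rightarrow> nat \<Rightarrow> ('a \<Rightarrow> 'k::comm_ring_1) \<Rightarrow> 'a \<Rightarrow> 'k" where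
  "bdry face n c = (\<lambda>y. \<Sum>i\<le>n. (-1)^i * lin (face n i) c y)"

definition cyct :: "(nat \<Rightarrow> 'a \<Rightarrow> 'a) \<Rightarrow> nat \<Rightarrow> ('a \<Rightarrow> 'k::comm_ring_1) \<Rightarrow> 'a \<Rightarrow> 'k" where
  "cyct tau n c = (\<lambda>y. (-1)^n * lin (tau n) c y)"

text \<open>Involution on the cyclic (Connes) complex: (-1)^(n(n+1)/2) omega_n (Loday's convention).\<close>
definition invl :: "(nat \<Rightarrow> 'a \<Rightarrow> 'a) \<Rightarrow> nat \<Rightarrow> ('a \<Rightarrow> 'k::comm_ring_1) \<Rightarrow> 'a \<Rightarrow> 'k" where
  "invl omega n c = (\<lambda>y. (-1)^(n * (n + 1) div 2) * lin (omega n) c y)"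

text \<open>Image of (1 - t_n): the subspace one quotients by to get Connes' complex C^lambda.\<close>
definition imt :: "(nat \<Rightarrow> 'a set) \<Rightarrow> (nat \<Rightarrow> 'a \<Rightarrow> 'a) \<Rightarrow> nat \<Rightarrow> ('a \<Rightarrow> 'k::comm_ring_1) set" where
  "imt Bas tau n = {(\<lambda>y. c y - cyct tau n c y) | c. c \<in> chains (Bas n)}"

text \<open>Lifts to C_n of the s-eigenspace (s = 1 or -1) of the involution on C^lambda_n.\<close>
definition dchains :: "(nat \<Rightarrow> 'a set) \<Rightarrow> (nat \<Rightarrow> 'a \<Rightarrow> 'a) \<Rightarrow> (nat \<Rightarrow> 'a \<Rightarrow> 'a)
    \<Rightarrow> 'k::comm_ring_1 \<Rightarrow> nat \<Rightarrow> ('a \<Rightarrow> 'k) set" where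
  "dchains Bas tau omega s n =
     {x \<in> chains (Bas n). (\<lambda>y. x y - s * invl omega n x y) \<in> imt Bas tau n}"

text \<open>Lifts of cycles and of boundaries; dihedral homology in degree n is dcycles / dbound.\<close>
definition dcycles :: "(nat \<Rightarrow> 'a set) \<Rightarrow> (nat \<Rightarrow> nat \<Rightarrow> 'a \<Rightarrow> 'a) \<Rightarrow> (nat \<Rightarrow> 'a \<Rightarrow> 'a)
    \<Rightarrow> (nat \<Rightarrow> 'a \<Rightarrow> 'a) \<Rightarrow> 'k::comm_ring_1 \<Rightarrow> nat \<Rightarrow> ('a \<Rightarrow> 'k) set" where
  "dcycles Bas face tau omega s n =
     {x \<in> dchains Bas tau omega s n. n = 0 \<or> bdry face n x \<in> imt Bas tau (n - 1)}"

definition dbound :: "(nat \<Rightarrow> 'a set) \<Rightarrow> (nat \<Rightarrow> nat \<Rightarrow> 'a \<Rightarrow> 'a) \<Rightarrow> (nat \<Rightarrow> 'a \<Rightarrow> 'a)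
    \<Rightarrow> (nat \<Rightarrow> 'a \<Rightarrow> 'a) \<Rightarrow> 'k::comm_ring_1 \<Rightarrow> nat \<Rightarrow> ('a \<Rightarrow> 'k) set" where
  "dbound Bas face tau omega s n =
     {(\<lambda>y. bdry face (Suc n) x y + z y) | x z.
        x \<in> dchains Bas tau omega s (Suc n) \<and> z \<in> imt Bas tau n}"

text \<open>Isomorphism of k-vector spaces Z/B and Z'/B' (subquotients of function spaces):
  a k-linear map on Z into Z' inducing a bijection of the quotients.\<close>
definition subquot_iso :: "('a \<Rightarrow> 'k::field) set \<Rightarrow> ('a \<Rightarrow> 'k) set \<Rightarrow> ('b \<Rightarrow> 'k) set \<Rightarrow> ('b \<Rightarrow> 'k) set \<Rightarrow> bool" where
  "subquot_iso Z B Z' B' \<longleftrightarrow>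
     (\<exists>f. (\<forall>x\<in>Z. \<forall>y\<in>Z. \<forall>a. f (\<lambda>v. a * x v + y v) = (\<lambda>w. a * f x w + f y w))
        \<and> f ` Z \<subseteq> Z'
        \<and> (\<forall>z\<in>Z. f z \<in> B' \<longleftrightarrow> z \<in> B)
        \<and> (\<forall>z'\<in>Z'. \<exists>z\<in>Z. (\<lambda>w. f z w - z' w) \<in> B'))"

definition gprod :: "('g, 'b) monoid_scheme \<Rightarrow> 'g list \<Rightarrow> 'g" where
  "gprod G xs = foldr (\<lambda>g acc. g \<otimes>\<^bsub>G\<^esub> acc) xs \<one>\<^bsub>G\<^esub>"

section \<open>The dihedral module CC(kG;1,epsilon): degree n is (kG)^{\<otimes> n}, basis G^n\<close>

definition hopf_bas :: "('g, 'b) monoid_scheme \<Rightarrow> nat \<Rightarrow> 'g list set" where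
  "hopf_bas G n = {xs. length xs = n \<and> set xs \<subseteq> carrier G}"

definition hopf_face :: "('g, 'b) monoid_scheme \<Rightarrow> nat \<Rightarrow> nat \<Rightarrow> 'g list \<Rightarrow> 'g list" where
  "hopf_face G n i xs =
     (if i = 0 then tl xs
      else if i = n then butlast xs
      else take (i - 1) xs @ [xs ! (i - 1) \<otimes>\<^bsub>G\<^esub> xs ! i] @ drop (i + 1) xs)"

definition hopf_tau :: "('g, 'b) monoid_scheme \<Rightarrow> nat \<Rightarrow> 'g list \<Rightarrow> 'g list" where
  "hopf_tau G n xs = (if n = 0 then xs else inv\<^bsub>G\<^esub> (gprod G xs) # butlast xs)"

definition hopf_omega :: "('g, 'b) monoid_scheme \<Rightarrow> nat \<Rightarrow> 'g list \<Rightarrow> 'g list" where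
  "hopf_omega G n xs = rev (map (\<lambda>g. inv\<^bsub>G\<^esub> g) xs)"

section \<open>Dihedral submodule of the standard dihedral module of the *-algebra kG:
  degree n basis = (g_0,...,g_n) with g_0 ... g_n = 1\<close>

definition grp_bas :: "('g, 'b) monoid_scheme \<Rightarrow> nat \<Rightarrow> 'g list set" where
  "grp_bas G n = {xs. length xs = n + 1 \<and> set xs \<subseteq> carrier G \<and> gprod G xs = \<one>\<^bsub>G\<^esub>}"

definition grp_face :: "('g, 'b) monoid_scheme \<Rightarrow> nat \<Rightarrow> nat \<Rightarrow> 'g list \<Rightarrow> 'g list" where
  "grp_face G n i xs =
     (if i < n then take i xs @ [xs ! i \<otimes>\<^bsub>G\<^esub> xs ! (i + 1)] @ drop (i + 2) xs
      else (xs ! n \<otimes>\<^bsub>G\<^esub> xs ! 0) # take (n - 1) (drop 1 xs))"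

definition grp_tau :: "('g, 'b) monoid_scheme \<Rightarrow> nat \<Rightarrow> 'g list \<Rightarrow> 'g list" where
  "grp_tau G n xs = last xs # butlast xs"

definition grp_omega :: "('g, 'b) monoid_scheme \<Rightarrow> nat \<Rightarrow> 'g list \<Rightarrow> 'g list" where
  "grp_omega G n xs = inv\<^bsub>G\<^esub> (hd xs) # rev (map (\<lambda>g. inv\<^bsub>G\<^esub> g) (tl xs))"

section \<open>Dihedral homology groups as subquotients (s = 1 gives HC^+, s = -1 gives HC^-)\<close>

definition HC_hopf_Z :: "('g, 'b) monoid_scheme \<Rightarrow> 'k::comm_ring_1 \<Rightarrow> nat \<Rightarrow> ('g list \<Rightarrow> 'k) set" where
  "HC_hopf_Z G s n = dcycles (hopf_bas G) (hopf_face G) (hopf_tau G) (hopf_omega G) s n"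
definition HC_hopf_B :: "('g, 'b) monoid_scheme \<Rightarrow> 'k::comm_ring_1 \<Rightarrow> nat \<Rightarrow> ('g list \<Rightarrow> 'k) set" where
  "HC_hopf_B G s n = dbound (hopf_bas G) (hopf_face G) (hopf_tau G) (hopf_omega G) s n"
definition HC_grp_Z :: "('g, 'b) monoid_scheme \<Rightarrow> 'k::comm_ring_1 \<Rightarrow> nat \<Rightarrow> ('g list \<Rightarrow> 'k) set" where
  "HC_grp_Z G s n = dcycles (grp_bas G) (grp_face G) (grp_tau G) (grp_omega G) s n"
definition HC_grp_B :: "('g, 'b) monoid_scheme \<Rightarrow> 'k::comm_ring_1 \<Rightarrow> nat \<Rightarrow> ('g list \<Rightarrow> 'k) set" where
  "HC_grp_B G s n = dbound (grp_bas G) (grp_face G) (grp_tau G) (grp_omega G) s n"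

end

theory Submission
  imports Defs
begin

text \<open>The map \<open>(g\<^sub>0, \<dots>, g\<^sub>n) \<mapsto> (g\<^sub>1, \<dots>, g\<^sub>n)\<close> is a bijection from the basis of the group
  dihedral module (tuples with \<open>g\<^sub>0 \<cdots> g\<^sub>n = 1\<close>) onto \<open>G\<^sup>n\<close>, with inverse
  \<open>(g\<^sub>1, \<dots>, g\<^sub>n) \<mapsto> ((g\<^sub>1 \<cdots> g\<^sub>n)\<^sup>-\<^sup>1, g\<^sub>1, \<dots>, g\<^sub>n)\<close>. It commutes with all faces (the cyclic face
  \<open>(g\<^sub>n g\<^sub>0, g\<^sub>1, \<dots>, g\<^sub>n\<^sub>-\<^sub>1)\<close> goes to \<open>(g\<^sub>1, \<dots>, g\<^sub>n\<^sub>-\<^sub>1)\<close>), with the cyclic operators and with the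
  involutions, so it is an isomorphism of dihedral sets. Its \<open>k\<close>-linearisation is then an
  isomorphism of the dihedral complexes, compatible with every ingredient of dihedral homology;
  in particular neither the sign \<open>s\<close> nor the characteristic of \<open>k\<close> plays a role.\<close>

lemma chains_nonzero_in: "c \<in> chains A \<Longrightarrow> c x \<noteq> 0 \<Longrightarrow> x \<in> A"
  by (auto simp: chains_def)

lemma chains_outside_zero: "c \<in> chains A \<Longrightarrow> x \<notin> A \<Longrightarrow> c x = 0"
  by (auto simp: chains_def)

lemma chains_zero: "(\<lambda>_. 0) \<in> chains A"
  by (simp add: chains_def)

lemma chains_pointwise_combination:
  assumes c: "c \<in> chains A" and d: "d \<in> chains A" and e: "\<And>x. c x = 0 \<Longrightarrow> d x = 0 \<Longrightarrow> e x = 0"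
  shows "e \<in> chains A"
proof -
  have sub: "{x. e x \<noteq> 0} \<subseteq> {x. c x \<noteq> 0} \<union> {x. d x \<noteq> 0}" using e by blast
  have "finite ({x. c x \<noteq> 0} \<union> {x. d x \<noteq> 0})" and "{x. c x \<noteq> 0} \<union> {x. d x \<noteq> 0} \<subseteq> A"
    using c d by (auto simp: chains_def)
  then show ?thesis using sub by (auto simp: chains_def intro: finite_subset)
qed

lemma chains_add:
  fixes c :: "'a \<Rightarrow> 'k::monoid_add"
  shows "c \<in> chains A \<Longrightarrow> d \<in> chains A \<Longrightarrow> (\<lambda>x. c x + d x) \<in> chains A"
  by (rule chains_pointwise_combination[of c A d]) simp_all

lemma chains_diff:
  fixes c :: "'a \<Rightarrow> 'k::ab_group_add"
  shows "c \<in> chains A \<Longrightarrow> d \<in> chains A \<Longrightarrow> (\<lambda>x. c x - d x) \<in> chains A"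
  by (rule chains_pointwise_combination[of c A d]) simp_all

lemma chains_scale:
  fixes c :: "'a \<Rightarrow> 'k::mult_zero"
  shows "c \<in> chains A \<Longrightarrow> (\<lambda>x. a * c x) \<in> chains A"
  by (rule chains_pointwise_combination[of c A c]) simp_all

lemma chains_sum:
  fixes c :: "'i \<Rightarrow> 'a \<Rightarrow> 'k::comm_monoid_add"
  assumes "finite I" "\<And>i. i \<in> I \<Longrightarrow> c i \<in> chains A"
  shows "(\<lambda>x. \<Sum>i\<in>I. c i x) \<in> chains A"
  using assms by (induction I rule: finite_induct) (simp_all add: chains_zero chains_add)

lemma lin_zero: "lin f (\<lambda>_. 0::'k::comm_ring_1) = (\<lambda>_. 0)"
  by (rule ext) (simp add: lin_def)

lemma lin_nonzero_imp_preimage: "lin f c y \<noteq> 0 \<Longrightarrow> \<exists>x. c x \<noteq> 0 \<and> f x = y"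
proof (rule ccontr)
  assume "lin f c y \<noteq> 0" and "\<nexists>x. c x \<noteq> 0 \<and> f x = y"
  then have "{x. c x \<noteq> 0 \<and> f x = y} = {}" by blast
  then have "lin f c y = sum c {}" by (simp only: lin_def)
  with \<open>lin f c y \<noteq> 0\<close> show False by simp
qed

lemma chains_lin:
  assumes c: "c \<in> chains A" and f: "\<And>x. x \<in> A \<Longrightarrow> f x \<in> B"
  shows "lin f c \<in> chains B"
proof -
  have sub: "{y. lin f c y \<noteq> 0} \<subseteq> f ` {x. c x \<noteq> 0}"
    using lin_nonzero_imp_preimage by fastforce
  have "finite {x. c x \<noteq> 0}" and "f ` {x. c x \<noteq> 0} \<subseteq> B"
    using c f by (auto simp: chains_def)
  then show ?thesis using sub by (auto simp: chains_def intro: finite_subset)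
qed

lemma chains_bdry:
  assumes "c \<in> chains A" "\<And>i x. i \<le> n \<Longrightarrow> x \<in> A \<Longrightarrow> face n i x \<in> B"
  shows "bdry face n c \<in> chains B"
  unfolding bdry_def using assms by (intro chains_sum chains_scale chains_lin) auto

text \<open>For a bijection \<open>\<psi> : A' \<rightarrow> A\<close>, \<open>pullback A' \<psi>\<close> is the \<open>k\<close>-linear extension of \<open>\<psi>\<^sup>-\<^sup>1\<close>
  on chains supported in \<open>A\<close>.\<close>

definition pullback :: "'b set \<Rightarrow> ('b \<Rightarrow> 'a) \<Rightarrow> ('a \<Rightarrow> 'k::zero) \<Rightarrow> 'b \<Rightarrow> 'k" where
  "pullback A' \<psi> c = (\<lambda>y. if y \<in> A' then c (\<psi> y) else 0)"

lemma pullback_add: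
  fixes c :: "'a \<Rightarrow> 'k::monoid_add"
  shows "pullback A' \<psi> (\<lambda>x. c x + d x) = (\<lambda>y. pullback A' \<psi> c y + pullback A' \<psi> d y)"
  by (simp add: pullback_def fun_eq_iff)

lemma pullback_diff:
  fixes c :: "'a \<Rightarrow> 'k::group_add"
  shows "pullback A' \<psi> (\<lambda>x. c x - d x) = (\<lambda>y. pullback A' \<psi> c y - pullback A' \<psi> d y)"
  by (simp add: pullback_def fun_eq_iff)

lemma pullback_scale:
  fixes c :: "'a \<Rightarrow> 'k::mult_zero"
  shows "pullback A' \<psi> (\<lambda>x. a * c x) = (\<lambda>y. a * pullback A' \<psi> c y)"
  by (simp add: pullback_def fun_eq_iff)

lemma pullback_chains:
  assumes c: "c \<in> chains A" and \<psi>: "bij_betw \<psi> A' A"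
  shows "pullback A' \<psi> c \<in> chains A'"
proof -
  have supp: "{y. pullback A' \<psi> c y \<noteq> 0} = {y \<in> A'. c (\<psi> y) \<noteq> 0}"
    by (auto simp: pullback_def)
  have "inj_on \<psi> {y \<in> A'. c (\<psi> y) \<noteq> 0}"
    using \<psi> by (auto simp: bij_betw_def intro: inj_on_subset)
  moreover have "\<psi> ` {y \<in> A'. c (\<psi> y) \<noteq> 0} \<subseteq> {x. c x \<noteq> 0}" by auto
  moreover have "finite {x. c x \<noteq> 0}" using c by (simp add: chains_def)
  ultimately have "finite {y \<in> A'. c (\<psi> y) \<noteq> 0}" by (meson finite_imageD finite_subset)
  then show ?thesis by (simp add: chains_def supp)
qed

lemma bij_betw_pullback:
  assumes \<psi>: "bij_betw \<psi> A' A"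
  shows "bij_betw (pullback A' \<psi>) (chains A) (chains A')"
proof (rule bij_betw_imageI)
  show "inj_on (pullback A' \<psi>) (chains A)"
  proof (rule inj_onI)
    fix c d assume c: "c \<in> chains A" and d: "d \<in> chains A"
      and eq: "pullback A' \<psi> c = pullback A' \<psi> d"
    show "c = d"
    proof
      fix x show "c x = d x"
      proof (cases "x \<in> A")
        case True
        then obtain y where "y \<in> A'" "x = \<psi> y" using \<psi> by (auto simp: bij_betw_def)
        then show ?thesis using fun_cong[OF eq, of y] by (simp add: pullback_def)
      qed (simp add: chains_outside_zero[OF c] chains_outside_zero[OF d])
    qed
  qed
  show "pullback A' \<psi> ` chains A = chains A'"
  proof (intro equalityI subsetI)
    fix c' assume c': "c' \<in> chains A'"
    let ?\<phi> = "the_inv_into A' \<psi>"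
    have \<phi>: "bij_betw ?\<phi> A A'" by (rule bij_betw_the_inv_into[OF \<psi>])
    have "pullback A' \<psi> (pullback A ?\<phi> c') = c'"
      using \<psi> bij_betwE[OF \<psi>] by (auto simp: pullback_def bij_betw_def the_inv_into_f_f
          chains_outside_zero[OF c'])
    then show "c' \<in> pullback A' \<psi> ` chains A"
      using pullback_chains[OF c' \<phi>] by (metis image_eqI)
  qed (auto intro: pullback_chains[OF _ \<psi>])
qed

lemma lin_pullback:
  fixes c :: "'a \<Rightarrow> 'k::comm_ring_1"
  assumes c: "c \<in> chains A" and \<psi>A: "bij_betw \<psi> A' A" and \<psi>B: "inj_on \<psi> B'"
    and f'B: "\<And>y. y \<in> A' \<Longrightarrow> f' y \<in> B'" and comm: "\<And>y. y \<in> A' \<Longrightarrow> \<psi> (f' y) = f (\<psi> y)"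
  shows "lin f' (pullback A' \<psi> c) = pullback B' \<psi> (lin f c)"
proof
  fix z
  show "lin f' (pullback A' \<psi> c) z = pullback B' \<psi> (lin f c) z"
  proof (cases "z \<in> B'")
    case False
    then have "{y. pullback A' \<psi> c y \<noteq> 0 \<and> f' y = z} = {}"
      using f'B by (auto simp: pullback_def)
    then show ?thesis using False by (simp only: lin_def sum.empty) (simp add: pullback_def)
  next
    case True
    define S where "S = {y \<in> A'. c (\<psi> y) \<noteq> 0 \<and> f' y = z}"
    have inj: "inj_on \<psi> S" using \<psi>A by (auto simp: S_def bij_betw_def intro: inj_on_subset)
    have img: "\<psi> ` S = {x. c x \<noteq> 0 \<and> f x = \<psi> z}"
    proof (intro equalityI subsetI)
      fix x assume x: "x \<in> {x. c x \<noteq> 0 \<and> f x = \<psi> z}"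
      then obtain y where y: "y \<in> A'" "x = \<psi> y"
        using chains_nonzero_in[OF c] \<psi>A by (auto simp: bij_betw_def)
      have "\<psi> (f' y) = \<psi> z" using comm y x by auto
      then have "f' y = z" using inj_onD[OF \<psi>B] f'B y True by blast
      then show "x \<in> \<psi> ` S" using x y by (auto simp: S_def)
    qed (use comm in \<open>auto simp: S_def\<close>)
    have "lin f' (pullback A' \<psi> c) z = (\<Sum>y\<in>S. c (\<psi> y))"
      unfolding lin_def S_def by (rule sum.cong) (auto simp: pullback_def)
    also have "\<dots> = lin f c (\<psi> z)"
      using sum.reindex[OF inj, of c] img by (simp add: lin_def)
    finally show ?thesis using True by (simp add: pullback_def)
  qed
qed

lemma zero_in_imt: "(\<lambda>_. 0::'k::comm_ring_1) \<in> imt Bas tau n"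
  unfolding imt_def by (intro CollectI exI[of _ "\<lambda>_. 0"]) (simp add: cyct_def lin_zero chains_zero)

lemma zero_in_dbound: "(\<lambda>_. 0::'k::comm_ring_1) \<in> dbound Bas face tau omega s n"
  unfolding dbound_def dchains_def
  by (intro CollectI exI[of _ "\<lambda>_. 0"]) (simp add: bdry_def invl_def lin_zero chains_zero zero_in_imt)

lemma dbound_eq_image:
  "dbound Bas face tau omega s n =
     (\<lambda>(x, z). \<lambda>y. bdry face (Suc n) x y + z y) ` (dchains Bas tau omega s (Suc n) \<times> imt Bas tau n)"
  unfolding dbound_def by auto

locale dihedral_set_iso =
  fixes Bas :: "nat \<Rightarrow> 'a set" and face :: "nat \<Rightarrow> nat \<Rightarrow> 'a \<Rightarrow> 'a"
    and tau :: "nat \<Rightarrow> 'a \<Rightarrow> 'a" and omega :: "nat \<Rightarrow> 'a \<Rightarrow> 'a"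
    and Bas' :: "nat \<Rightarrow> 'b set" and face' :: "nat \<Rightarrow> nat \<Rightarrow> 'b \<Rightarrow> 'b"
    and tau' :: "nat \<Rightarrow> 'b \<Rightarrow> 'b" and omega' :: "nat \<Rightarrow> 'b \<Rightarrow> 'b"
    and \<psi> :: "'b \<Rightarrow> 'a"
  assumes bij: "bij_betw \<psi> (Bas' n) (Bas n)"
    and face_closed: "1 \<le> n \<Longrightarrow> i \<le> n \<Longrightarrow> x \<in> Bas n \<Longrightarrow> face n i x \<in> Bas (n - 1)"
    and face'_closed: "1 \<le> n \<Longrightarrow> i \<le> n \<Longrightarrow> y \<in> Bas' n \<Longrightarrow> face' n i y \<in> Bas' (n - 1)"
    and tau_closed: "x \<in> Bas n \<Longrightarrow> tau n x \<in> Bas n"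
    and tau'_closed: "y \<in> Bas' n \<Longrightarrow> tau' n y \<in> Bas' n"
    and omega_closed: "x \<in> Bas n \<Longrightarrow> omega n x \<in> Bas n"
    and omega'_closed: "y \<in> Bas' n \<Longrightarrow> omega' n y \<in> Bas' n"
    and face_comm: "1 \<le> n \<Longrightarrow> i \<le> n \<Longrightarrow> y \<in> Bas' n \<Longrightarrow> \<psi> (face' n i y) = face n i (\<psi> y)"
    and tau_comm: "y \<in> Bas' n \<Longrightarrow> \<psi> (tau' n y) = tau n (\<psi> y)"
    and omega_comm: "y \<in> Bas' n \<Longrightarrow> \<psi> (omega' n y) = omega n (\<psi> y)"
begin

abbreviation pb :: "nat \<Rightarrow> ('a \<Rightarrow> 'k::comm_ring_1) \<Rightarrow> 'b \<Rightarrow> 'k" where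
  "pb n \<equiv> pullback (Bas' n) \<psi>"

lemma bij_betw_pb: "bij_betw (pb n) (chains (Bas n)) (chains (Bas' n))"
  by (rule bij_betw_pullback[OF bij])

lemma inj_on_pb: "inj_on (pb n) (chains (Bas n))"
  using bij_betw_pb by (rule bij_betw_imp_inj_on)

lemma pb_image_chains: "pb n ` chains (Bas n) = chains (Bas' n)"
  using bij_betw_pb by (rule bij_betw_imp_surj_on)

lemma pb_image_Collect:
  assumes "\<And>x. x \<in> chains (Bas n) \<Longrightarrow> Q' (pb n x) \<longleftrightarrow> Q x"
  shows "pb n ` {x \<in> chains (Bas n). Q x} = {x' \<in> chains (Bas' n). Q' x'}"
proof (intro equalityI subsetI)
  fix x' assume x': "x' \<in> {x' \<in> chains (Bas' n). Q' x'}"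
  then have "x' \<in> pb n ` chains (Bas n)" by (simp add: pb_image_chains)
  then obtain x where "x \<in> chains (Bas n)" "x' = pb n x" by (rule imageE)
  with x' show "x' \<in> pb n ` {x \<in> chains (Bas n). Q x}" using assms by blast
qed (use assms pb_image_chains in auto)

lemma pb_bdry:
  assumes "1 \<le> n" "c \<in> chains (Bas n)"
  shows "bdry face' n (pb n c) = pb (n - 1) (bdry face n c)"
proof -
  have "lin (face' n i) (pb n c) = pb (n - 1) (lin (face n i) c)" if "i \<le> n" for i
    using face'_closed[OF assms(1) that] face_comm[OF assms(1) that]
    by (intro lin_pullback[OF assms(2) bij] bij_betw_imp_inj_on[OF bij]) auto
  then show ?thesis by (auto simp: bdry_def pullback_def fun_eq_iff sum_distrib_left)
qed

lemma pb_cyct: "c \<in> chains (Bas n) \<Longrightarrow> cyct tau' n (pb n c) = pb n (cyct tau n c)"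
  unfolding cyct_def
  by (subst lin_pullback[OF _ bij bij_betw_imp_inj_on[OF bij]])
     (auto intro: tau'_closed tau_comm simp: pullback_def)

lemma pb_invl: "c \<in> chains (Bas n) \<Longrightarrow> invl omega' n (pb n c) = pb n (invl omega n c)"
  unfolding invl_def
  by (subst lin_pullback[OF _ bij bij_betw_imp_inj_on[OF bij]])
     (auto intro: omega'_closed omega_comm simp: pullback_def)

lemma chains_cyct: "c \<in> chains (Bas n) \<Longrightarrow> cyct tau n c \<in> chains (Bas n)"
  unfolding cyct_def by (intro chains_scale chains_lin[of c _ "tau n"] tau_closed)

lemma chains_invl: "c \<in> chains (Bas n) \<Longrightarrow> invl omega n c \<in> chains (Bas n)"
  unfolding invl_def by (intro chains_scale chains_lin[of c _ "omega n"] omega_closed)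

lemma imt_subset_chains: "imt Bas tau n \<subseteq> chains (Bas n)"
  unfolding imt_def by (auto intro: chains_diff chains_cyct)

lemma dchains_subset_chains: "dchains Bas tau omega s n \<subseteq> chains (Bas n)"
  unfolding dchains_def by blast

lemma dcycles_subset_chains: "dcycles Bas face tau omega s n \<subseteq> chains (Bas n)"
  unfolding dcycles_def using dchains_subset_chains by blast

lemma chains_bdry_face: "1 \<le> n \<Longrightarrow> c \<in> chains (Bas n) \<Longrightarrow> bdry face n c \<in> chains (Bas (n - 1))"
  using chains_bdry[of c "Bas n" n face "Bas (n - 1)"] face_closed[of n] by blast

lemma dbound_subset_chains: "dbound Bas face tau omega s n \<subseteq> chains (Bas n)"
  unfolding dbound_def
  using dchains_subset_chains imt_subset_chains
  by (blast intro: chains_add chains_bdry_face[of "Suc n", simplified])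

lemma pb_image_imt: "pb n ` imt Bas tau n = imt Bas' tau' n"
proof -
  have "pb n ` imt Bas tau n = (\<lambda>c. pb n (\<lambda>y. c y - cyct tau n c y)) ` chains (Bas n)"
    unfolding imt_def by blast
  also have "\<dots> = (\<lambda>c'. \<lambda>y. c' y - cyct tau' n c' y) ` pb n ` chains (Bas n)"
    unfolding image_image by (rule image_cong) (simp_all add: pullback_diff pb_cyct)
  finally show ?thesis unfolding pb_image_chains imt_def by blast
qed

lemma pb_in_imt_iff: "c \<in> chains (Bas n) \<Longrightarrow> pb n c \<in> imt Bas' tau' n \<longleftrightarrow> c \<in> imt Bas tau n"
  using inj_on_image_mem_iff[OF inj_on_pb _ imt_subset_chains]
  by (simp add: pb_image_imt[symmetric])

lemma pb_image_dchains:
  fixes s :: "'k::comm_ring_1"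
  shows "pb n ` dchains Bas tau omega s n = dchains Bas' tau' omega' s n"
  unfolding dchains_def
proof (rule pb_image_Collect)
  fix c :: "'a \<Rightarrow> 'k" assume c: "c \<in> chains (Bas n)"
  have "(\<lambda>y. pb n c y - s * invl omega' n (pb n c) y) = pb n (\<lambda>y. c y - s * invl omega n c y)"
    by (simp add: pb_invl[OF c] pullback_diff pullback_scale)
  then show "(\<lambda>y. pb n c y - s * invl omega' n (pb n c) y) \<in> imt Bas' tau' n
      \<longleftrightarrow> (\<lambda>y. c y - s * invl omega n c y) \<in> imt Bas tau n"
    using c by (simp add: pb_in_imt_iff chains_diff chains_scale chains_invl)
qed

lemma pb_in_dchains_iff:
  "c \<in> chains (Bas n) \<Longrightarrow> pb n c \<in> dchains Bas' tau' omega' s n \<longleftrightarrow> c \<in> dchains Bas tau omega s n"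
  using inj_on_image_mem_iff[OF inj_on_pb _ dchains_subset_chains]
  by (simp add: pb_image_dchains[symmetric])

lemma pb_image_dcycles:
  fixes s :: "'k::comm_ring_1"
  shows "pb n ` dcycles Bas face tau omega s n = dcycles Bas' face' tau' omega' s n"
proof -
  have dcycles_Collect: "\<And>Bas face tau omega. dcycles Bas face tau omega s n =
      {c \<in> chains (Bas n). c \<in> dchains Bas tau omega s n \<and>
         (n = 0 \<or> bdry face n c \<in> imt Bas tau (n - 1))}"
    unfolding dcycles_def dchains_def by blast
  show ?thesis
    unfolding dcycles_Collect
  proof (rule pb_image_Collect)
    fix c :: "'a \<Rightarrow> 'k" assume c: "c \<in> chains (Bas n)"
    have "bdry face' n (pb n c) \<in> imt Bas' tau' (n - 1) \<longleftrightarrow> bdry face n c \<in> imt Bas tau (n - 1)"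
      if "1 \<le> n"
      using pb_in_imt_iff[OF chains_bdry_face[OF that c]] by (simp add: pb_bdry[OF that c])
    then show "pb n c \<in> dchains Bas' tau' omega' s n \<and>
          (n = 0 \<or> bdry face' n (pb n c) \<in> imt Bas' tau' (n - 1))
        \<longleftrightarrow> c \<in> dchains Bas tau omega s n \<and> (n = 0 \<or> bdry face n c \<in> imt Bas tau (n - 1))"
      using pb_in_dchains_iff[OF c] by (cases "n = 0") auto
  qed
qed

lemma pb_image_dbound:
  fixes s :: "'k::comm_ring_1"
  shows "pb n ` dbound Bas face tau omega s n = dbound Bas' face' tau' omega' s n"
proof -
  let ?D = "dchains Bas tau omega s (Suc n)" and ?I = "imt Bas tau n"
  let ?plus = "\<lambda>(x, z). \<lambda>y. bdry face' (Suc n) x y + z y"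
  have pb_sum: "pb n (\<lambda>y. bdry face (Suc n) x y + z y) = ?plus (map_prod (pb (Suc n)) (pb n) (x, z))"
    if "x \<in> ?D" for x z
    using pb_bdry[of "Suc n" x] that dchains_subset_chains by (force simp: pullback_add)
  have "pb n ` dbound Bas face tau omega s n = ?plus ` map_prod (pb (Suc n)) (pb n) ` (?D \<times> ?I)"
    unfolding dbound_eq_image image_image by (rule image_cong) (auto simp: pb_sum)
  also have "\<dots> = dbound Bas' face' tau' omega' s n"
    unfolding map_prod_surj_on[OF pb_image_dchains pb_image_imt] dbound_eq_image ..
  finally show ?thesis .
qed

lemma pb_in_dbound_iff:
  "c \<in> chains (Bas n) \<Longrightarrow> pb n c \<in> dbound Bas' face' tau' omega' s n \<longleftrightarrow> c \<in> dbound Bas face tau omega s n"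
  using inj_on_image_mem_iff[OF inj_on_pb _ dbound_subset_chains]
  by (simp add: pb_image_dbound[symmetric])

lemma dihedral_homology_iso:
  fixes s :: "'k::field"
  shows "subquot_iso (dcycles Bas face tau omega s n) (dbound Bas face tau omega s n)
           (dcycles Bas' face' tau' omega' s n) (dbound Bas' face' tau' omega' s n)"
  unfolding subquot_iso_def
proof (intro exI[of _ "pb n"] conjI ballI allI)
  show "pb n (\<lambda>v. a * x v + y v) = (\<lambda>w. a * pb n x w + pb n y w)" for a x y
    by (simp add: pullback_add pullback_scale)
  show "pb n ` dcycles Bas face tau omega s n \<subseteq> dcycles Bas' face' tau' omega' s n"
    by (simp add: pb_image_dcycles)
  show "pb n z \<in> dbound Bas' face' tau' omega' s n \<longleftrightarrow> z \<in> dbound Bas face tau omega s n"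
    if "z \<in> dcycles Bas face tau omega s n" for z
    using that dcycles_subset_chains pb_in_dbound_iff by blast
  show "\<exists>z\<in>dcycles Bas face tau omega s n. (\<lambda>w. pb n z w - z' w) \<in> dbound Bas' face' tau' omega' s n"
    if "z' \<in> dcycles Bas' face' tau' omega' s n" for z'
  proof -
    have "z' \<in> pb n ` dcycles Bas face tau omega s n"
      using that by (simp only: pb_image_dcycles)
    then obtain z where z: "z' = pb n z" "z \<in> dcycles Bas face tau omega s n" by (rule imageE)
    have "(\<lambda>w. pb n z w - z' w) = (\<lambda>_. 0)" using z(1) by simp
    then show ?thesis using z(2) zero_in_dbound by (intro bexI[of _ z]) simp_all
  qed
qed

end

context group
begin

lemma gprod_Nil [simp]: "gprod G [] = \<one>"
  by (simp add: gprod_def)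

lemma gprod_Cons [simp]: "gprod G (x # xs) = x \<otimes> gprod G xs"
  by (simp add: gprod_def)

lemma gprod_closed [simp]: "set xs \<subseteq> carrier G \<Longrightarrow> gprod G xs \<in> carrier G"
  by (induction xs) auto

lemma gprod_append:
  "set xs \<subseteq> carrier G \<Longrightarrow> set ys \<subseteq> carrier G \<Longrightarrow> gprod G (xs @ ys) = gprod G xs \<otimes> gprod G ys"
  by (induction xs) (auto simp: m_assoc)

lemma gprod_rev_map_inv:
  "set xs \<subseteq> carrier G \<Longrightarrow> gprod G (rev (map (\<lambda>g. inv g) xs)) = inv (gprod G xs)"
proof (induction xs)
  case (Cons x xs)
  then have "set (rev (map (\<lambda>g. inv g) xs)) \<subseteq> carrier G" by auto
  with Cons show ?case by (simp add: gprod_append inv_mult_group)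
qed simp

lemma gprod_merge_adjacent:
  "Suc i < length ys \<Longrightarrow> set ys \<subseteq> carrier G \<Longrightarrow>
   gprod G (take i ys @ [ys ! i \<otimes> ys ! (i + 1)] @ drop (i + 2) ys) = gprod G ys"
proof (induction i arbitrary: ys)
  case 0
  then obtain a b r where "ys = a # b # r"
    by (metis Suc_length_conv less_imp_Suc_add add_Suc)
  then show ?case using 0 by (simp add: m_assoc)
next
  case (Suc j)
  then obtain a r where "ys = a # r" by (cases ys) auto
  then show ?case using Suc.IH[of r] Suc.prems by simp
qed

lemma gprod_snoc_eq_one_rotate:
  assumes "set xs \<subseteq> carrier G" "b \<in> carrier G" "gprod G (xs @ [b]) = \<one>"
  shows "gprod G (b # xs) = \<one>"
proof -
  have "gprod G xs \<otimes> b = \<one>" using assms by (simp add: gprod_append)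
  then have "inv b = gprod G xs" using assms(1,2) by (simp add: inv_equality)
  then show ?thesis using assms(2) by (metis gprod_Cons r_inv)
qed

lemma grp_bas_iff:
  "ys \<in> grp_bas G n \<longleftrightarrow> tl ys \<in> hopf_bas G n \<and> ys = inv (gprod G (tl ys)) # tl ys"
proof
  assume "ys \<in> grp_bas G n"
  then have l: "length ys = n + 1" and c: "set ys \<subseteq> carrier G" and p: "gprod G ys = \<one>"
    by (auto simp: grp_bas_def)
  obtain a t where ys: "ys = a # t" using l by (cases ys) auto
  have "inv (gprod G t) = a" using p c ys by (simp add: inv_equality)
  then show "tl ys \<in> hopf_bas G n \<and> ys = inv (gprod G (tl ys)) # tl ys"
    using l c ys by (simp add: hopf_bas_def)
next
  assume "tl ys \<in> hopf_bas G n \<and> ys = inv (gprod G (tl ys)) # tl ys"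
  then have t: "length (tl ys) = n" "set (tl ys) \<subseteq> carrier G"
    and ys: "ys = inv (gprod G (tl ys)) # tl ys" by (auto simp: hopf_bas_def)
  have "gprod G ys = \<one>" using t by (subst ys) (simp add: l_inv)
  then show "ys \<in> grp_bas G n" using t by (subst ys) (simp add: grp_bas_def)
qed

lemma bij_betw_tl_grp_bas: "bij_betw tl (grp_bas G n) (hopf_bas G n)"
proof (rule bij_betw_imageI)
  show "inj_on tl (grp_bas G n)"
    by (rule inj_onI) (metis grp_bas_iff)
  show "tl ` grp_bas G n = hopf_bas G n"
  proof (intro equalityI subsetI)
    fix t assume "t \<in> hopf_bas G n"
    then have "inv (gprod G t) # t \<in> grp_bas G n" by (simp add: grp_bas_iff)
    then show "t \<in> tl ` grp_bas G n" by (rule rev_image_eqI) simp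
  qed (auto simp: grp_bas_iff)
qed

lemma hopf_face_closed:
  assumes "1 \<le> n" "i \<le> n" "xs \<in> hopf_bas G n"
  shows "hopf_face G n i xs \<in> hopf_bas G (n - 1)"
proof -
  have l: "length xs = n" and c: "set xs \<subseteq> carrier G" using assms(3) by (auto simp: hopf_bas_def)
  consider "i = 0" | "i = n" "i \<noteq> 0" | "0 < i" "i < n" using assms by linarith
  then show ?thesis
  proof cases
    case 1
    have "set (tl xs) \<subseteq> set xs" by (cases xs) auto
    then show ?thesis using 1 l c by (auto simp: hopf_face_def hopf_bas_def)
  next
    case 2
    have "set (butlast xs) \<subseteq> set xs" by (auto dest: in_set_butlastD)
    then show ?thesis using 2 l c by (auto simp: hopf_face_def hopf_bas_def)
  next
    case 3
    have "xs ! (i - 1) \<otimes> xs ! i \<in> carrier G" using 3 l c by (auto intro!: m_closed nth_mem)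
    moreover have "set (take (i - 1) xs) \<subseteq> carrier G" "set (drop (i + 1) xs) \<subseteq> carrier G"
      using c set_take_subset set_drop_subset by fastforce+
    ultimately show ?thesis using 3 l by (auto simp: hopf_face_def hopf_bas_def)
  qed
qed

lemma grp_face_closed:
  assumes "1 \<le> n" "i \<le> n" "ys \<in> grp_bas G n"
  shows "grp_face G n i ys \<in> grp_bas G (n - 1)"
proof -
  have l: "length ys = n + 1" and c: "set ys \<subseteq> carrier G" and p: "gprod G ys = \<one>"
    using assms(3) by (auto simp: grp_bas_def)
  show ?thesis
  proof (cases "i < n")
    case True
    have "ys ! i \<otimes> ys ! (i + 1) \<in> carrier G" using True l c by (auto intro!: m_closed nth_mem)
    moreover have "set (take i ys) \<subseteq> carrier G" "set (drop (i + 2) ys) \<subseteq> carrier G"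
      using c set_take_subset set_drop_subset by fastforce+
    moreover have "gprod G (take i ys @ [ys ! i \<otimes> ys ! (i + 1)] @ drop (i + 2) ys) = \<one>"
      using gprod_merge_adjacent[of i ys] True l c p by simp
    ultimately show ?thesis using True l by (auto simp: grp_face_def grp_bas_def)
  next
    case False
    obtain a t where "ys = a # t" using l by (cases ys) auto
    moreover have "t \<noteq> []" using \<open>ys = a # t\<close> l assms(1) by auto
    ultimately obtain mid b where ys: "ys = a # mid @ [b]" by (metis rev_exhaust)
    have n: "n = Suc (length mid)" and i: "i = n" using l ys False assms(2) by auto
    have a: "a \<in> carrier G" and b: "b \<in> carrier G" and mid: "set mid \<subseteq> carrier G"
      using c ys by auto
    have "gprod G (b # a # mid) = \<one>"
      using gprod_snoc_eq_one_rotate[of "a # mid" b] p ys a b mid by simp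
    then have "gprod G ((b \<otimes> a) # mid) = \<one>" using a b mid by (simp add: m_assoc)
    moreover have "grp_face G n i ys = (b \<otimes> a) # mid"
      using i ys n by (simp add: grp_face_def nth_append)
    ultimately show ?thesis using a b mid n by (simp add: grp_bas_def)
  qed
qed

lemma hopf_tau_closed: "xs \<in> hopf_bas G n \<Longrightarrow> hopf_tau G n xs \<in> hopf_bas G n"
  by (auto simp: hopf_tau_def hopf_bas_def dest: in_set_butlastD)

lemma grp_tau_closed:
  assumes "ys \<in> grp_bas G n"
  shows "grp_tau G n ys \<in> grp_bas G n"
proof -
  have l: "length ys = n + 1" and c: "set ys \<subseteq> carrier G" and p: "gprod G ys = \<one>"
    using assms by (auto simp: grp_bas_def)
  obtain r b where ys: "ys = r @ [b]" using l by (cases ys rule: rev_cases) auto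
  have "gprod G (b # r) = \<one>" using gprod_snoc_eq_one_rotate[of r b] p c ys by simp
  then show ?thesis using ys l c by (simp add: grp_tau_def grp_bas_def)
qed

lemma hopf_omega_closed: "xs \<in> hopf_bas G n \<Longrightarrow> hopf_omega G n xs \<in> hopf_bas G n"
  by (auto simp: hopf_omega_def hopf_bas_def)

lemma grp_omega_closed:
  assumes "ys \<in> grp_bas G n"
  shows "grp_omega G n ys \<in> grp_bas G n"
proof -
  obtain t where t: "t \<in> hopf_bas G n" and ys: "ys = inv (gprod G t) # t"
    using assms grp_bas_iff by blast
  have "gprod G (grp_omega G n ys) = \<one>"
    using t by (simp add: ys grp_omega_def gprod_rev_map_inv hopf_bas_def)
  then show ?thesis using t by (auto simp: ys grp_omega_def grp_bas_def hopf_bas_def)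
qed

end

lemma tl_grp_face:
  assumes "1 \<le> n" "i \<le> n" "length ys = n + 1"
  shows "tl (grp_face G n i ys) = hopf_face G n i (tl ys)"
proof -
  obtain a t where ys: "ys = a # t" using assms(3) by (cases ys) auto
  consider "i = n" | "i = 0" "i < n" | j where "i = Suc j" "i < n"
    using assms(2) by (cases i) force+
  then show ?thesis
    using ys assms by cases (auto simp: grp_face_def hopf_face_def butlast_conv_take drop_Suc)
qed

lemma tl_grp_tau: "length t = n \<Longrightarrow> tl (grp_tau G n (inv\<^bsub>G\<^esub> (gprod G t) # t)) = hopf_tau G n t"
  by (cases "t = []") (auto simp: grp_tau_def hopf_tau_def)

lemma tl_grp_omega: "tl (grp_omega G n ys) = hopf_omega G n (tl ys)"
  by (simp add: grp_omega_def hopf_omega_def)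

lemma (in group) dihedral_set_iso_tl:
  "dihedral_set_iso (hopf_bas G) (hopf_face G) (hopf_tau G) (hopf_omega G)
     (grp_bas G) (grp_face G) (grp_tau G) (grp_omega G) tl"
proof
  fix n i ys assume "1 \<le> n" "i \<le> n" "ys \<in> grp_bas G n"
  then show "tl (grp_face G n i ys) = hopf_face G n i (tl ys)"
    by (intro tl_grp_face) (simp_all add: grp_bas_def)
next
  fix n ys assume "ys \<in> grp_bas G n"
  then have ys: "ys = inv (gprod G (tl ys)) # tl ys" and l: "length (tl ys) = n"
    by (simp_all add: grp_bas_iff hopf_bas_def)
  have "tl (grp_tau G n ys) = tl (grp_tau G n (inv (gprod G (tl ys)) # tl ys))"
    by (rule arg_cong[OF ys])
  also have "\<dots> = hopf_tau G n (tl ys)" by (rule tl_grp_tau[OF l])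
  finally show "tl (grp_tau G n ys) = hopf_tau G n (tl ys)" .
qed (rule bij_betw_tl_grp_bas hopf_face_closed grp_face_closed hopf_tau_closed grp_tau_closed
      hopf_omega_closed grp_omega_closed tl_grp_omega; assumption)+

theorem proposition5p6:
  fixes G :: "('g, 'b) monoid_scheme" and s :: "'k::field_char_0" and n :: nat
  assumes "group G" and "s = 1 \<or> s = -1"
  shows "subquot_iso (HC_hopf_Z G s n) (HC_hopf_B G s n) (HC_grp_Z G s n) (HC_grp_B G s n)"
proof -
  interpret dihedral_set_iso "hopf_bas G" "hopf_face G" "hopf_tau G" "hopf_omega G"
      "grp_bas G" "grp_face G" "grp_tau G" "grp_omega G" tl
    using assms(1) by (rule group.dihedral_set_iso_tl)
  show ?thesis
    unfolding HC_hopf_Z_def HC_hopf_B_def HC_grp_Z_def HC_grp_B_def by (rule dihedral_homology_iso)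
qed

end
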